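(* Let $S$ be a semilattice and $\omega$ a submultiplicative weight on $S$ such that $(S,\omega)$ is flighty. Then $\ell^1_\omega(S)$ is AMNM. (In particular this holds whenever $\omega$ is bounded, and whenever $S$ has finite breadth — e.g. finite width or finite height — for every submultiplicative weight $\omega$.)
   Context: A semilattice is a commutative semigroup in which every element is idempotent. A weight is $\omega:S\to(0,\infty)$, submultiplicative if $\omega(xy)\le\omega(x)\omega(y)$. $\ell^1_\omega(S)$ is the Banach space of $a:S\to\mathbb C$ with $\|a\|=\sum_s|a(s)|\omega(s)<\infty$ with convolution product ($\delta_x*\delta_y=\delta_{xy}$). For $E\subseteq S$, $\langle E\rangle$ is the subsemigroup generated by $E$ and $\langle E\rangle_n=\{x_1\cdots x_n: x_i\in E\}$. The breadth of $S$ is $\sup_{E\subseteq S}\inf\{n:\langle E\rangle_n=\langle E\rangle\}$. For $K>0$ let $W_K=\{x\in S:\omega(x)\le K\}$; $(S,\omega)$ is flighty if for every $K>0$, $\sup\{\omega(y): y\in\langle W_K\rangle\}<\infty$. For a bounded linear map $T$ between Banach algebras, $\operatorname{def}(T)=\sup\{\|T(xy)-T(x)T(y)\|:\|x\|,\|y\|\le1\}$. A Banach algebra $A$ is AMNM if for every $\varepsilon>0$ there is $\delta>0$ such that every $\psi\in A^*$ with $\operatorname{def}(\psi)\le\delta$ is within distance $\varepsilon$ (in $A^*$) of a bounded multiplicative linear functional (possibly $0$). *)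

theory Defs
  imports "HOL-Analysis.Analysis"
begin

text \<open>The semilattice S is the carrier type 'a with product f (locale semilattice:
  associative, commutative, idempotent).\<close>

definition l1w :: "('a \<Rightarrow> real) \<Rightarrow> ('a \<Rightarrow> complex) set" where
  "l1w \<omega> = {a. (\<lambda>s. norm (a s) * \<omega> s) summable_on UNIV}"

definition l1norm :: "('a \<Rightarrow> real) \<Rightarrow> ('a \<Rightarrow> complex) \<Rightarrow> real" where
  "l1norm \<omega> a = (\<Sum>\<^sub>\<infinity>s. norm (a s) * \<omega> s)"

text \<open>Convolution: delta_x * delta_y = delta_(f x y).\<close>
definition conv :: "('a \<Rightarrow> 'a \<Rightarrow> 'a) \<Rightarrow> ('a \<Rightarrow> complex) \<Rightarrow> ('a \<Rightarrow> complex) \<Rightarrow> ('a \<Rightarrow> complex)" where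
  "conv f a b = (\<lambda>t. \<Sum>\<^sub>\<infinity>p\<in>{p. f (fst p) (snd p) = t}. a (fst p) * b (snd p))"

definition bdd_lin_fun :: "('a \<Rightarrow> real) \<Rightarrow> (('a \<Rightarrow> complex) \<Rightarrow> complex) \<Rightarrow> bool" where
  "bdd_lin_fun \<omega> \<psi> \<longleftrightarrow>
     (\<forall>a\<in>l1w \<omega>. \<forall>b\<in>l1w \<omega>. \<psi> (\<lambda>s. a s + b s) = \<psi> a + \<psi> b) \<and>
     (\<forall>a\<in>l1w \<omega>. \<forall>c. \<psi> (\<lambda>s. c * a s) = c * \<psi> a) \<and>
     (\<exists>C. \<forall>a\<in>l1w \<omega>. norm (\<psi> a) \<le> C * l1norm \<omega> a)"

definition dual_norm :: "('a \<Rightarrow> real) \<Rightarrow> (('a \<Rightarrow> complex) \<Rightarrow> complex) \<Rightarrow> real" where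
  "dual_norm \<omega> \<psi> = Sup {norm (\<psi> a) | a. a \<in> l1w \<omega> \<and> l1norm \<omega> a \<le> 1}"

text \<open>Bounded multiplicative linear functionals (the zero functional included).\<close>
definition mult_fun :: "('a \<Rightarrow> 'a \<Rightarrow> 'a) \<Rightarrow> ('a \<Rightarrow> real) \<Rightarrow> (('a \<Rightarrow> complex) \<Rightarrow> complex) \<Rightarrow> bool" where
  "mult_fun f \<omega> \<phi> \<longleftrightarrow> bdd_lin_fun \<omega> \<phi> \<and>
     (\<forall>a\<in>l1w \<omega>. \<forall>b\<in>l1w \<omega>. \<phi> (conv f a b) = \<phi> a * \<phi> b)"

definition defect :: "('a \<Rightarrow> 'a \<Rightarrow> 'a) \<Rightarrow> ('a \<Rightarrow> real) \<Rightarrow> (('a \<Rightarrow> complex) \<Rightarrow> complex) \<Rightarrow> real" where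
  "defect f \<omega> \<psi> = Sup {norm (\<psi> (conv f a b) - \<psi> a * \<psi> b) | a b.
       a \<in> l1w \<omega> \<and> b \<in> l1w \<omega> \<and> l1norm \<omega> a \<le> 1 \<and> l1norm \<omega> b \<le> 1}"

definition AMNM :: "('a \<Rightarrow> 'a \<Rightarrow> 'a) \<Rightarrow> ('a \<Rightarrow> real) \<Rightarrow> bool" where
  "AMNM f \<omega> \<longleftrightarrow> (\<forall>\<epsilon>>0. \<exists>\<delta>>0. \<forall>\<psi>. bdd_lin_fun \<omega> \<psi> \<and> defect f \<omega> \<psi> \<le> \<delta> \<longrightarrow>
      (\<exists>\<phi>. mult_fun f \<omega> \<phi> \<and> dual_norm \<omega> (\<lambda>a. \<psi> a - \<phi> a) \<le> \<epsilon>))"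

inductive_set gen :: "('a \<Rightarrow> 'a \<Rightarrow> 'a) \<Rightarrow> 'a set \<Rightarrow> 'a set" for f E where
  base: "x \<in> E \<Longrightarrow> x \<in> gen f E"
| step: "x \<in> gen f E \<Longrightarrow> y \<in> gen f E \<Longrightarrow> f x y \<in> gen f E"

definition submult_weight :: "('a \<Rightarrow> 'a \<Rightarrow> 'a) \<Rightarrow> ('a \<Rightarrow> real) \<Rightarrow> bool" where
  "submult_weight f \<omega> \<longleftrightarrow> (\<forall>x. \<omega> x > 0) \<and> (\<forall>x y. \<omega> (f x y) \<le> \<omega> x * \<omega> y)"

definition flighty :: "('a \<Rightarrow> 'a \<Rightarrow> 'a) \<Rightarrow> ('a \<Rightarrow> real) \<Rightarrow> bool" where
  "flighty f \<omega> \<longleftrightarrow> (\<forall>K>0. bdd_above (\<omega> ` gen f {x. \<omega> x \<le> K}))"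

end

theory Submission
  imports Defs
begin

text \<open>
  Let \<psi> be a bounded functional on l1_omega(S) with small defect \<delta>, and put
  g(s) = \<psi>(e_s).  Testing the defect on normalised point masses gives
  |g(st) - g(s) g(t)| \<le> \<delta> \<omega>(s) \<omega>(t).  Flightiness bounds the weight by some M on the
  subsemigroup generated by W = {\<omega> \<le> K}, so on that subsemigroup g is multiplicative up to
  \<delta> M^2; there g is close to 0 or 1, the points of W where it is close to 1 generate a
  subsemigroup whose up-closure is a filter F, and g is close to the indicator of F on W.
  Off W the weight is large, and near-idempotence forces |g(s)| \<le> (\<epsilon>/2) \<omega>(s).  Hence
  |g(s) - 1_F(s)| \<le> \<epsilon> \<omega>(s) for all s, and since the point masses span a dense
  subspace this says that \<psi> is \<epsilon>-close in the dual norm to the character a \<mapsto> \<Sum>_{s\<in>F} a(s).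
\<close>

section \<open>Unordered sums\<close>

lemma has_sum_product_nonneg:
  fixes u v :: "_ \<Rightarrow> real"
  assumes "u summable_on A" "v summable_on B"
    and "\<And>x. x \<in> A \<Longrightarrow> u x \<ge> 0" "\<And>y. y \<in> B \<Longrightarrow> v y \<ge> 0"
  shows "((\<lambda>p. u (fst p) * v (snd p)) has_sum (infsum u A * infsum v B)) (A \<times> B)"
proof -
  have rows: "((\<lambda>y. (\<lambda>p. u (fst p) * v (snd p)) (x, y)) has_sum (u x * infsum v B)) B" if "x \<in> A" for x
    using has_sum_cmult_right[OF has_sum_infsum[OF assms(2)]] by simp
  have total: "((\<lambda>x. u x * infsum v B) has_sum (infsum u A * infsum v B)) A"
    using has_sum_cmult_left[OF has_sum_infsum[OF assms(1)]] by simp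
  have "(\<lambda>p. u (fst p) * v (snd p)) summable_on Sigma A (\<lambda>_. B)"
    by (rule summable_on_SigmaI[OF rows]) (use total assms in \<open>auto simp: summable_on_def\<close>)
  then show ?thesis using has_sum_SigmaI[OF rows total] by simp
qed

lemma has_sum_product:
  fixes a b :: "_ \<Rightarrow> 'b :: {real_normed_div_algebra, banach}"
  assumes "(\<lambda>x. norm (a x)) summable_on A" "(\<lambda>x. norm (b x)) summable_on B"
  shows "((\<lambda>p. a (fst p) * b (snd p)) has_sum (infsum a A * infsum b B)) (A \<times> B)"
proof -
  have "(\<lambda>p. norm (a (fst p)) * norm (b (snd p))) summable_on (A \<times> B)"
    using has_sum_product_nonneg[OF assms] summable_on_def by auto
  then have "(\<lambda>p. norm (a (fst p) * b (snd p))) summable_on (A \<times> B)" by (simp add: norm_mult)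
  then have summable: "(\<lambda>p. a (fst p) * b (snd p)) summable_on Sigma A (\<lambda>_. B)"
    by (rule abs_summable_summable)
  have "a summable_on A" "b summable_on B"
    using assms by (simp_all add: abs_summable_summable)
  have rows: "((\<lambda>y. (\<lambda>p. a (fst p) * b (snd p)) (x, y)) has_sum (a x * infsum b B)) B" for x
    using has_sum_cmult_right[OF has_sum_infsum[OF \<open>b summable_on B\<close>]] by simp
  have total: "((\<lambda>x. a x * infsum b B) has_sum (infsum a A * infsum b B)) A"
    using has_sum_cmult_left[OF has_sum_infsum[OF \<open>a summable_on A\<close>]] by simp
  show ?thesis using has_sum_SigmaI[OF rows total summable] by simp
qed

section \<open>Near-idempotent and near-unit complex numbers\<close>

text \<open>A complex number z with z - z^2 small is close to 0 or to 1, because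
  |z - z^2| = |z| |z - 1| and |z| + |z - 1| \<ge> 1.\<close>

lemma near_idempotent:
  fixes z :: complex
  assumes "norm (z - z * z) \<le> \<beta>"
  shows "norm z \<le> 2 * \<beta> \<or> norm (z - 1) \<le> 2 * \<beta>"
proof -
  have "z - z * z = - (z * (z - 1))" by (simp add: algebra_simps)
  then have prod: "norm z * norm (z - 1) \<le> \<beta>"
    using assms by (simp only: norm_minus_cancel norm_mult)
  have "norm z + norm (z - 1) \<ge> 1"
    using norm_triangle_ineq[of z "1 - z"] by (simp add: norm_minus_commute)
  then consider "norm z \<ge> 1/2" | "norm (z - 1) \<ge> 1/2" by linarith
  then show ?thesis
  proof cases
    case 1
    then have "(1/2) * norm (z - 1) \<le> norm z * norm (z - 1)" by (rule mult_right_mono) simp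
    then show ?thesis using prod by linarith
  next
    case 2
    then have "norm z * (1/2) \<le> norm z * norm (z - 1)" by (rule mult_left_mono) simp
    then show ?thesis using prod by linarith
  qed
qed

text \<open>If u and v are within \<eta> \<le> 1/10 of 1 and w is within \<eta>/2 of uv, then w stays
  away from 0; this keeps the values near 1 closed under products.\<close>

lemma near_one_product:
  fixes u v w :: complex
  assumes "norm (u - 1) \<le> \<eta>" "norm (v - 1) \<le> \<eta>" "norm (w - u * v) \<le> \<eta>/2"
    and "0 \<le> \<eta>" "\<eta> \<le> 1/10"
  shows "norm w > \<eta>"
proof -
  have "norm v \<le> 1 + \<eta>" using assms(2) norm_triangle_ineq[of "v - 1" 1] by simp
  have "norm (u * v - 1) = norm ((u - 1) * v + (v - 1))" by (simp add: algebra_simps)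
  also have "\<dots> \<le> norm (u - 1) * norm v + norm (v - 1)"
    using norm_triangle_ineq[of "(u - 1) * v" "v - 1"] by (simp add: norm_mult)
  also have "\<dots> \<le> \<eta> * (1 + \<eta>) + \<eta>"
    using mult_mono[OF assms(1) \<open>norm v \<le> 1 + \<eta>\<close> assms(4) norm_ge_zero] assms(2) by linarith
  finally have "norm (u * v - 1) \<le> \<eta> * (1 + \<eta>) + \<eta>" .
  moreover have "1 \<le> norm w + norm (w - u * v) + norm (u * v - 1)"
  proof -
    have "norm (1::complex) \<le> norm (w + (u * v - w)) + norm (1 - u * v)"
      using norm_triangle_ineq[of "w + (u * v - w)" "1 - u * v"] by simp
    also have "norm (w + (u * v - w)) \<le> norm w + norm (u * v - w)" by (rule norm_triangle_ineq)
    finally show ?thesis by (simp add: norm_minus_commute)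
  qed
  moreover have "\<eta> * (1 + \<eta>) = \<eta> + \<eta> * \<eta>" by (simp add: algebra_simps)
  moreover have "\<eta> * \<eta> \<le> \<eta> * (1/10)" using assms by (intro mult_left_mono) auto
  ultimately show ?thesis using assms(3,5) by linarith
qed

text \<open>If x is within \<eta> \<le> 1/10 of 1 and x \<approx> xt up to \<eta>/2, then t stays away from 0;
  this shows that points above a near-1 point are near 1 again.\<close>

lemma near_one_absorbs:
  fixes x t :: complex
  assumes "norm (x - 1) \<le> \<eta>" "norm (x - x * t) \<le> \<eta>/2" "0 \<le> \<eta>" "\<eta> \<le> 1/10"
  shows "norm t > \<eta>"
proof (rule ccontr)
  assume "\<not> norm t > \<eta>"
  then have "norm (x * t) \<le> norm x * \<eta>" by (simp add: norm_mult mult_left_mono)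
  moreover have "norm x \<le> norm (x - x * t) + norm (x * t)"
    using norm_triangle_ineq[of "x - x * t" "x * t"] by simp
  ultimately have "norm x * (1 - \<eta>) \<le> \<eta>/2" using assms(2) by (simp add: algebra_simps)
  moreover have "norm x \<ge> 1 - \<eta>"
    using assms(1) norm_triangle_ineq2[of 1 x] by (simp add: norm_minus_commute)
  then have "(1 - \<eta>) * (1 - \<eta>) \<le> norm x * (1 - \<eta>)" using assms by (intro mult_right_mono) auto
  moreover have "(1 - \<eta>) * (1 - \<eta>) = 1 - 2 * \<eta> + \<eta> * \<eta>" by (simp add: algebra_simps)
  moreover have "\<eta> * \<eta> \<ge> 0" by simp
  ultimately show False using assms(3,4) by linarith
qed

lemma near_idempotent_large_weight:
  fixes z :: complex
  assumes "norm (z - z * z) \<le> \<delta> * w * w" "\<delta> \<le> \<epsilon>\<^sup>2/8" "\<epsilon> * w > 4" "\<epsilon> > 0"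
  shows "norm z \<le> (\<epsilon>/2) * w"
proof (rule ccontr)
  define r where "r = norm z"
  assume "\<not> norm z \<le> (\<epsilon>/2) * w"
  then have r_big: "r > (\<epsilon>/2) * w" by (simp add: r_def)
  with assms(3) have "r > 2" by simp
  have "r * r - r \<le> norm (z * z - z)"
    unfolding r_def using norm_triangle_ineq2[of "z * z" z] by (simp add: norm_mult)
  also have "\<dots> \<le> \<delta> * w * w" using assms(1) by (simp add: norm_minus_commute)
  moreover have "2 * r \<le> r * r" using \<open>r > 2\<close> by (intro mult_right_mono) auto
  ultimately have "r * r \<le> 2 * (\<delta> * (w * w))" by (simp add: mult.assoc)
  also have "\<dots> \<le> 2 * (\<epsilon>\<^sup>2/8 * (w * w))" by (intro mult_left_mono mult_right_mono assms(2)) auto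
  also have "\<dots> = ((\<epsilon>/2) * w) * ((\<epsilon>/2) * w)" by (simp add: power2_eq_square field_simps)
  also have "\<dots> < r * r" using r_big assms(3,4) by (intro mult_strict_mono) auto
  finally show False by simp
qed

section \<open>Filters in a semilattice\<close>

text \<open>A filter of the semilattice (S, f) is a set F with xy \<in> F iff x \<in> F and y \<in> F;
  its indicator is exactly a multiplicative {0,1}-valued function on S.\<close>

definition sl_filter :: "('a \<Rightarrow> 'a \<Rightarrow> 'a) \<Rightarrow> 'a set \<Rightarrow> bool" where
  "sl_filter f F \<longleftrightarrow> (\<forall>x y. f x y \<in> F \<longleftrightarrow> x \<in> F \<and> y \<in> F)"

definition up_closure :: "('a \<Rightarrow> 'a \<Rightarrow> 'a) \<Rightarrow> 'a set \<Rightarrow> 'a set" where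
  "up_closure f G = {t. \<exists>x\<in>G. f x t = x}"

context semilattice
begin

lemma subset_up_closure: "G \<subseteq> up_closure (\<^bold>*) G"
  unfolding up_closure_def using idem by blast

lemma up_closure_filter:
  assumes "\<And>x y. x \<in> G \<Longrightarrow> y \<in> G \<Longrightarrow> x \<^bold>* y \<in> G"
  shows "sl_filter (\<^bold>*) (up_closure (\<^bold>*) G)"
  unfolding sl_filter_def
proof (intro allI iffI)
  fix x y assume "x \<^bold>* y \<in> up_closure (\<^bold>*) G"
  then obtain z where "z \<in> G" "z \<^bold>* (x \<^bold>* y) = z" by (auto simp: up_closure_def)
  moreover from this have "z \<^bold>* x = z" "z \<^bold>* y = z" by (metis assoc commute left_idem)+
  ultimately show "x \<in> up_closure (\<^bold>*) G \<and> y \<in> up_closure (\<^bold>*) G"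
    by (auto simp: up_closure_def)
next
  fix x y assume "x \<in> up_closure (\<^bold>*) G \<and> y \<in> up_closure (\<^bold>*) G"
  then obtain z1 z2 where "z1 \<in> G" "z1 \<^bold>* x = z1" "z2 \<in> G" "z2 \<^bold>* y = z2"
    by (auto simp: up_closure_def)
  moreover from this have "(z1 \<^bold>* z2) \<^bold>* (x \<^bold>* y) = z1 \<^bold>* z2" by (metis assoc left_commute)
  ultimately show "x \<^bold>* y \<in> up_closure (\<^bold>*) G"
    using assms by (auto simp: up_closure_def)
qed

text \<open>The filter is the up-closure of the subsemigroup generated
  by the points of W where the function is near 1.\<close>

theorem near_filter_on_generators:
  fixes g :: "'a \<Rightarrow> complex"
  assumes "0 < \<eta>" "\<eta> \<le> 1/10"
    and near_mult: "\<And>x y. x \<in> gen (\<^bold>*) W \<Longrightarrow> y \<in> gen (\<^bold>*) W \<Longrightarrow>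
                       norm (g (x \<^bold>* y) - g x * g y) \<le> \<eta>/2"
  shows "\<exists>F. sl_filter (\<^bold>*) F \<and> (\<forall>t\<in>W. norm (g t - (if t \<in> F then 1 else 0)) \<le> \<eta>)"
proof -
  have zero_or_one: "norm (g x) \<le> \<eta> \<or> norm (g x - 1) \<le> \<eta>" if "x \<in> gen (\<^bold>*) W" for x
    using near_idempotent[of "g x" "\<eta>/2"] near_mult[OF that that] by simp
  define W1 where "W1 = {s \<in> W. norm (g s - 1) \<le> \<eta>}"
  have gen_W1: "x \<in> gen (\<^bold>*) W \<and> norm (g x - 1) \<le> \<eta>" if "x \<in> gen (\<^bold>*) W1" for x
    using that
  proof (induction x rule: gen.induct)
    case (base x)
    then show ?case by (auto simp: W1_def intro: gen.base)
  next
    case (step x y)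
    then have "norm (g (x \<^bold>* y)) > \<eta>"
      using near_one_product[of "g x" \<eta> "g y" "g (x \<^bold>* y)"] near_mult[of x y] assms(1,2) by simp
    moreover have xy: "x \<^bold>* y \<in> gen (\<^bold>*) W" using step.IH by (blast intro: gen.step)
    ultimately show ?case using zero_or_one[OF xy] by simp
  qed
  define F where "F = up_closure (\<^bold>*) (gen (\<^bold>*) W1)"
  have filter: "sl_filter (\<^bold>*) F"
    unfolding F_def by (rule up_closure_filter) (rule gen.step)
  have near_one: "norm (g t - 1) \<le> \<eta>" if "t \<in> W" "t \<in> F" for t
  proof -
    obtain x where x: "x \<in> gen (\<^bold>*) W1" "x \<^bold>* t = x" using \<open>t \<in> F\<close> by (auto simp: F_def up_closure_def)
    have t: "t \<in> gen (\<^bold>*) W" using \<open>t \<in> W\<close> by (rule gen.base)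
    have "norm (g x - g x * g t) \<le> \<eta>/2" using near_mult[OF _ t, of x] gen_W1[OF x(1)] x(2) by simp
    then have "norm (g t) > \<eta>"
      using near_one_absorbs[of "g x" \<eta> "g t"] gen_W1[OF x(1)] assms(1,2) by simp
    then show ?thesis using zero_or_one[OF t] by simp
  qed
  have near_zero: "norm (g t) \<le> \<eta>" if "t \<in> W" "t \<notin> F" for t
  proof -
    have "W1 \<subseteq> gen (\<^bold>*) W1" by (auto intro: gen.base)
    then have "W1 \<subseteq> F" unfolding F_def using subset_up_closure by blast
    then have "t \<notin> W1" using that(2) by blast
    then show ?thesis using zero_or_one[OF gen.base[OF \<open>t \<in> W\<close>]] \<open>t \<in> W\<close> by (auto simp: W1_def)
  qed
  have "norm (g t - (if t \<in> F then 1 else 0)) \<le> \<eta>" if "t \<in> W" for t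
    using near_one[OF that] near_zero[OF that] by (cases "t \<in> F") simp_all
  with filter show ?thesis by blast
qed

end

section \<open>The weighted semigroup algebra\<close>

definition dirac :: "'a \<Rightarrow> 'a \<Rightarrow> complex" where
  "dirac s = (\<lambda>x. if x = s then 1 else 0)"

definition linear_fun :: "('a \<Rightarrow> real) \<Rightarrow> (('a \<Rightarrow> complex) \<Rightarrow> complex) \<Rightarrow> bool" where
  "linear_fun \<omega> h \<longleftrightarrow> (\<forall>a\<in>l1w \<omega>. \<forall>b\<in>l1w \<omega>. h (\<lambda>s. a s + b s) = h a + h b) \<and>
     (\<forall>a\<in>l1w \<omega>. \<forall>c. h (\<lambda>s. c * a s) = c * h a)"

lemma linear_fun_add:
  "linear_fun \<omega> h \<Longrightarrow> a \<in> l1w \<omega> \<Longrightarrow> b \<in> l1w \<omega> \<Longrightarrow> h (\<lambda>s. a s + b s) = h a + h b"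
  by (simp add: linear_fun_def)

lemma linear_fun_scale: "linear_fun \<omega> h \<Longrightarrow> a \<in> l1w \<omega> \<Longrightarrow> h (\<lambda>s. c * a s) = c * h a"
  by (simp add: linear_fun_def)

lemma linear_fun_diff:
  assumes "linear_fun \<omega> h" "linear_fun \<omega> k"
  shows "linear_fun \<omega> (\<lambda>a. h a - k a)"
  unfolding linear_fun_def
  using linear_fun_add[OF assms(1)] linear_fun_add[OF assms(2)]
    linear_fun_scale[OF assms(1)] linear_fun_scale[OF assms(2)]
  by (simp add: right_diff_distrib)

lemma bdd_lin_fun_iff:
  "bdd_lin_fun \<omega> \<psi> \<longleftrightarrow> linear_fun \<omega> \<psi> \<and> (\<exists>C. \<forall>a\<in>l1w \<omega>. norm (\<psi> a) \<le> C * l1norm \<omega> a)"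
  by (simp add: bdd_lin_fun_def linear_fun_def)

text \<open>g is multiplicative up to \<delta> relative to the weight:
  |g(st) - g(s) g(t)| \<le> \<delta> \<omega>(s) \<omega>(t).  This is what a small defect gives on point masses.\<close>

definition near_mult :: "('a \<Rightarrow> 'a \<Rightarrow> 'a) \<Rightarrow> ('a \<Rightarrow> real) \<Rightarrow> real \<Rightarrow> ('a \<Rightarrow> complex) \<Rightarrow> bool" where
  "near_mult f \<omega> \<delta> g \<longleftrightarrow> (\<forall>s t. norm (g (f s t) - g s * g t) \<le> \<delta> * \<omega> s * \<omega> t)"

locale weighted_semilattice = semilattice f for f :: "'a \<Rightarrow> 'a \<Rightarrow> 'a" (infixl "\<^bold>*" 70) +
  fixes \<omega> :: "'a \<Rightarrow> real"
  assumes submult_weight: "submult_weight f \<omega>"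
begin

lemma weight_pos: "\<omega> x > 0"
  using submult_weight by (auto simp: submult_weight_def)

lemma weight_submult: "\<omega> (x \<^bold>* y) \<le> \<omega> x * \<omega> y"
  using submult_weight by (auto simp: submult_weight_def)

text \<open>Since every element is idempotent, \<omega>(x) \<le> \<omega>(x)^2, so the weight is at least 1;
  hence l1_omega(S) embeds in l1(S).\<close>

lemma weight_ge_one: "\<omega> x \<ge> 1"
  using weight_submult[of x x] weight_pos[of x] by simp

lemma norm_le_weighted: "norm z \<le> norm z * \<omega> s"
  using mult_left_mono[OF weight_ge_one, of "norm z" s] by simp

lemma l1norm_has_sum: "a \<in> l1w \<omega> \<Longrightarrow> ((\<lambda>s. norm (a s) * \<omega> s) has_sum l1norm \<omega> a) UNIV"
  by (simp add: l1w_def l1norm_def)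

lemma l1w_weighted_summable: "a \<in> l1w \<omega> \<Longrightarrow> (\<lambda>s. norm (a s) * \<omega> s) summable_on A"
  using summable_on_subset_banach by (auto simp: l1w_def)

lemma l1w_abs_summable: "a \<in> l1w \<omega> \<Longrightarrow> (\<lambda>s. norm (a s)) summable_on A"
  by (rule summable_on_comparison_test[OF l1w_weighted_summable]) (use norm_le_weighted in auto)

lemma l1w_summable: "a \<in> l1w \<omega> \<Longrightarrow> a summable_on A"
  using abs_summable_summable l1w_abs_summable by blast

lemma l1norm_nonneg: "l1norm \<omega> a \<ge> 0"
  unfolding l1norm_def by (rule infsum_nonneg) (simp add: weight_pos less_imp_le)

lemma l1w_scale: "a \<in> l1w \<omega> \<Longrightarrow> (\<lambda>s. c * a s) \<in> l1w \<omega>"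
  using summable_on_cmult_right[of "\<lambda>s. norm (a s) * \<omega> s" UNIV "norm c"]
  by (simp add: l1w_def norm_mult mult.assoc)

lemma l1w_finite_support: "finite A \<Longrightarrow> (\<And>x. x \<notin> A \<Longrightarrow> a x = 0) \<Longrightarrow> a \<in> l1w \<omega>"
  unfolding l1w_def summable_on_def mem_Collect_eq
  by (rule exI, rule has_sum_finite_neutralI[of A]) auto

lemma l1w_zero: "(\<lambda>s. 0) \<in> l1w \<omega>"
  by (simp add: l1w_def)

lemma dirac_l1w: "dirac s \<in> l1w \<omega>"
  by (rule l1w_finite_support[of "{s}"]) (auto simp: dirac_def)

lemma l1norm_scaled_dirac: "l1norm \<omega> (\<lambda>x. c * dirac s x) = norm c * \<omega> s"
proof -
  have "((\<lambda>x. norm (c * dirac s x) * \<omega> x) has_sum (norm c * \<omega> s)) UNIV"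
    by (rule has_sum_finite_neutralI[of "{s}"]) (auto simp: dirac_def)
  then show ?thesis unfolding l1norm_def by (rule infsumI)
qed

lemma pair_family_summable:
  assumes a: "a \<in> l1w \<omega>" and b: "b \<in> l1w \<omega>"
  defines "Q \<equiv> \<lambda>p. (norm (a (fst p)) * \<omega> (fst p)) * (norm (b (snd p)) * \<omega> (snd p))"
  shows "(Q has_sum (l1norm \<omega> a * l1norm \<omega> b)) UNIV"
    and "Q summable_on X"
    and "(\<lambda>p. norm (a (fst p) * b (snd p))) summable_on X"
    and "(\<lambda>p. a (fst p) * b (snd p)) summable_on X"
proof -
  show Q: "(Q has_sum (l1norm \<omega> a * l1norm \<omega> b)) UNIV"
    using has_sum_product_nonneg[of "\<lambda>s. norm (a s) * \<omega> s" UNIV "\<lambda>s. norm (b s) * \<omega> s" UNIV] a b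
    by (auto simp: Q_def l1w_def l1norm_def weight_pos less_imp_le)
  then show Q_summable: "Q summable_on X" for X
    using summable_on_subset_banach[of Q UNIV X] by (auto simp: summable_on_def)
  have "norm (a (fst p) * b (snd p)) \<le> Q p" for p
    unfolding norm_mult Q_def
    by (rule mult_mono[OF norm_le_weighted norm_le_weighted]) (auto simp: weight_pos less_imp_le)
  then show abs: "(\<lambda>p. norm (a (fst p) * b (snd p))) summable_on X" for X
    by (intro summable_on_comparison_test[OF Q_summable]) auto
  show "(\<lambda>p. a (fst p) * b (snd p)) summable_on X"
    by (rule abs_summable_summable[OF abs])
qed

lemma sum_over_fibres:
  fixes P :: "'a \<times> 'a \<Rightarrow> 'b::banach"
  assumes "P summable_on {p. fst p \<^bold>* snd p \<in> T}"
  shows "(\<lambda>t. infsum P {p. fst p \<^bold>* snd p = t}) summable_on T"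
    and "infsum (\<lambda>t. infsum P {p. fst p \<^bold>* snd p = t}) T = infsum P {p. fst p \<^bold>* snd p \<in> T}"
proof -
  have fibres: "Sigma T (\<lambda>t. {p. fst p \<^bold>* snd p = t}) = (\<lambda>p. (fst p \<^bold>* snd p, p)) ` {p. fst p \<^bold>* snd p \<in> T}"
    by auto
  have inj: "inj_on (\<lambda>p. (fst p \<^bold>* snd p, p)) X" for X by (auto simp: inj_on_def)
  have summable: "(\<lambda>(t, p). P p) summable_on Sigma T (\<lambda>t. {p. fst p \<^bold>* snd p = t})"
    unfolding fibres by (subst summable_on_reindex[OF inj]) (simp add: o_def assms)
  then show "(\<lambda>t. infsum P {p. fst p \<^bold>* snd p = t}) summable_on T"
    by (rule summable_on_Sigma_banach)
  have "infsum (\<lambda>t. infsum P {p. fst p \<^bold>* snd p = t}) T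
      = infsum (\<lambda>(t, p). P p) (Sigma T (\<lambda>t. {p. fst p \<^bold>* snd p = t}))"
    by (rule infsum_Sigma'_banach[OF summable])
  also have "\<dots> = infsum P {p. fst p \<^bold>* snd p \<in> T}"
    unfolding fibres by (subst infsum_reindex[OF inj]) (simp add: o_def)
  finally show "infsum (\<lambda>t. infsum P {p. fst p \<^bold>* snd p = t}) T = infsum P {p. fst p \<^bold>* snd p \<in> T}" .
qed

lemma conv_l1w:
  assumes a: "a \<in> l1w \<omega>" and b: "b \<in> l1w \<omega>"
  shows "conv f a b \<in> l1w \<omega>" and "l1norm \<omega> (conv f a b) \<le> l1norm \<omega> a * l1norm \<omega> b"
proof -
  let ?B = "\<lambda>t. {p. fst p \<^bold>* snd p = t}"
  let ?P = "\<lambda>p. a (fst p) * b (snd p)"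
  let ?Q = "\<lambda>p. (norm (a (fst p)) * \<omega> (fst p)) * (norm (b (snd p)) * \<omega> (snd p))"
  note family = pair_family_summable[OF a b]
  have R: "(\<lambda>t. infsum ?Q (?B t)) summable_on UNIV"
    and R_sum: "infsum (\<lambda>t. infsum ?Q (?B t)) UNIV = l1norm \<omega> a * l1norm \<omega> b"
    using sum_over_fibres[of ?Q UNIV] family(1,2) by (simp_all add: infsumI)
  have bound: "norm (conv f a b t) * \<omega> t \<le> infsum ?Q (?B t)" for t
  proof -
    have "norm (conv f a b t) * \<omega> t \<le> infsum (\<lambda>p. norm (?P p)) (?B t) * \<omega> t"
      unfolding conv_def
      by (rule mult_right_mono[OF norm_infsum_bound[OF family(3)]]) (simp add: weight_pos less_imp_le)
    also have "\<dots> = infsum (\<lambda>p. norm (?P p) * \<omega> t) (?B t)"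
      by (rule infsum_cmult_left[symmetric]) (use family(3) in auto)
    also have "\<dots> \<le> infsum ?Q (?B t)"
    proof (rule infsum_mono[OF summable_on_cmult_left[OF family(3)] family(2)])
      fix p assume "p \<in> ?B t"
      then have "\<omega> t \<le> \<omega> (fst p) * \<omega> (snd p)" using weight_submult by auto
      then have "norm (?P p) * \<omega> t \<le> norm (?P p) * (\<omega> (fst p) * \<omega> (snd p))"
        by (rule mult_left_mono) simp
      then show "norm (?P p) * \<omega> t \<le> ?Q p" by (simp add: norm_mult algebra_simps)
    qed
    finally show ?thesis .
  qed
  have summable: "(\<lambda>t. norm (conv f a b t) * \<omega> t) summable_on UNIV"
    by (rule summable_on_comparison_test[OF R]) (use bound in \<open>auto simp: weight_pos less_imp_le\<close>)
  then show "conv f a b \<in> l1w \<omega>" by (simp add: l1w_def)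
  have "l1norm \<omega> (conv f a b) \<le> infsum (\<lambda>t. infsum ?Q (?B t)) UNIV"
    unfolding l1norm_def by (rule infsum_mono[OF summable R bound])
  with R_sum show "l1norm \<omega> (conv f a b) \<le> l1norm \<omega> a * l1norm \<omega> b" by simp
qed

lemma conv_dirac: "conv f (\<lambda>x. c * dirac s x) (\<lambda>x. d * dirac t x) = (\<lambda>x. (c * d) * dirac (s \<^bold>* t) x)"
proof
  fix x
  let ?g = "\<lambda>p. c * dirac s (fst p) * (d * dirac t (snd p))"
  have "conv f (\<lambda>x. c * dirac s x) (\<lambda>x. d * dirac t x) x = infsum ?g {p. fst p \<^bold>* snd p = x}"
    by (simp add: conv_def)
  also have "\<dots> = infsum ?g ({(s, t)} \<inter> {p. fst p \<^bold>* snd p = x})"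
    by (rule infsum_cong_neutral) (auto simp: dirac_def)
  also have "\<dots> = (c * d) * dirac (s \<^bold>* t) x"
    by (cases "s \<^bold>* t = x") (auto simp: dirac_def)
  finally show "conv f (\<lambda>x. c * dirac s x) (\<lambda>x. d * dirac t x) x = (c * d) * dirac (s \<^bold>* t) x" .
qed

text \<open>Summing over a filter F is multiplicative on convolutions: the pairs whose product
  lies in F are exactly F \<times> F.\<close>

lemma filter_sum_conv:
  assumes a: "a \<in> l1w \<omega>" and b: "b \<in> l1w \<omega>" and F: "sl_filter (\<^bold>*) F"
  shows "infsum (conv f a b) F = infsum a F * infsum b F"
proof -
  let ?P = "\<lambda>p. a (fst p) * b (snd p)"
  have pairs: "{p. fst p \<^bold>* snd p \<in> F} = F \<times> F" using F by (auto simp: sl_filter_def)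
  have "infsum (conv f a b) F = infsum (\<lambda>t. infsum ?P {p. fst p \<^bold>* snd p = t}) F"
    by (simp add: conv_def)
  also have "\<dots> = infsum ?P (F \<times> F)"
    using sum_over_fibres(2)[of ?P F] pair_family_summable(4)[OF a b] pairs by simp
  also have "\<dots> = infsum a F * infsum b F"
    by (rule infsumI[OF has_sum_product[OF l1w_abs_summable[OF a] l1w_abs_summable[OF b]]])
  finally show ?thesis .
qed

text \<open>Since \<omega> \<ge> 1, summing over any set is bounded by the weighted norm.\<close>

lemma filter_sum_bound: "a \<in> l1w \<omega> \<Longrightarrow> norm (infsum a F) \<le> l1norm \<omega> a"
proof -
  assume a: "a \<in> l1w \<omega>"
  have "norm (infsum a F) \<le> infsum (\<lambda>s. norm (a s)) F"
    by (rule norm_infsum_bound[OF l1w_abs_summable[OF a]])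
  also have "\<dots> \<le> infsum (\<lambda>s. norm (a s) * \<omega> s) F"
    by (rule infsum_mono[OF l1w_abs_summable[OF a] l1w_weighted_summable[OF a]])
      (rule norm_le_weighted)
  also have "\<dots> \<le> l1norm \<omega> a" unfolding l1norm_def
    by (rule infsum_mono_neutral[OF l1w_weighted_summable[OF a] l1w_weighted_summable[OF a]])
      (auto simp: weight_pos less_imp_le)
  finally show ?thesis .
qed

lemma filter_character:
  assumes "sl_filter (\<^bold>*) F"
  shows "mult_fun f \<omega> (\<lambda>a. infsum a F)"
  unfolding mult_fun_def bdd_lin_fun_iff linear_fun_def
  using infsum_add[OF l1w_summable l1w_summable] infsum_cmult_right[OF l1w_summable]
    filter_sum_bound filter_sum_conv[OF _ _ assms]
  by (auto intro!: exI[of _ 1])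

lemma filter_sum_dirac: "infsum (dirac s) F = (if s \<in> F then 1 else 0)"
proof -
  have "infsum (dirac s) F = infsum (dirac s) ({s} \<inter> F)"
    by (rule infsum_cong_neutral) (auto simp: dirac_def)
  then show ?thesis by (cases "s \<in> F") (auto simp: dirac_def)
qed

lemma linear_fun_zero: "linear_fun \<omega> h \<Longrightarrow> h (\<lambda>s. 0) = 0"
  using linear_fun_scale[OF _ l1w_zero, of h 0] by simp

lemma linear_fun_finite_support:
  assumes h: "linear_fun \<omega> h" and "finite A"
  shows "h (\<lambda>x. if x \<in> A then a x else 0) = (\<Sum>s\<in>A. a s * h (dirac s))"
  using \<open>finite A\<close>
proof (induction A)
  case empty
  then show ?case using linear_fun_zero[OF h] by simp
next
  case (insert s A)
  have split: "(\<lambda>x. if x \<in> insert s A then a x else 0)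
             = (\<lambda>x. (if x \<in> A then a x else 0) + a s * dirac s x)"
    using insert.hyps by (auto simp: dirac_def fun_eq_iff)
  have "(\<lambda>x. if x \<in> A then a x else 0) \<in> l1w \<omega>"
    by (rule l1w_finite_support[OF insert.hyps(1)]) auto
  then have "h (\<lambda>x. if x \<in> insert s A then a x else 0)
           = h (\<lambda>x. if x \<in> A then a x else 0) + a s * h (dirac s)"
    unfolding split using linear_fun_add[OF h _ l1w_scale[OF dirac_l1w]] linear_fun_scale[OF h dirac_l1w]
    by simp
  with insert show ?case by (simp add: add.commute)
qed

lemma l1w_finite_approximation:
  assumes a: "a \<in> l1w \<omega>" and "\<eta> > 0"
  obtains A where "finite A" "(\<lambda>x. if x \<in> A then 0 else a x) \<in> l1w \<omega>"
    "l1norm \<omega> (\<lambda>x. if x \<in> A then 0 else a x) \<le> \<eta>"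
    "(\<Sum>s\<in>A. norm (a s) * \<omega> s) \<le> l1norm \<omega> a"
proof -
  let ?g = "\<lambda>s. norm (a s) * \<omega> s"
  obtain A where A: "finite A" "dist (sum ?g A) (l1norm \<omega> a) \<le> \<eta>"
    using has_sum_finite_approximation[OF l1norm_has_sum[OF a] \<open>\<eta> > 0\<close>] by blast
  let ?r = "\<lambda>x. if x \<in> A then 0 else a x"
  have "?r \<in> l1w \<omega>" unfolding l1w_def mem_Collect_eq
    by (rule summable_on_comparison_test[OF l1w_weighted_summable[OF a]])
      (auto simp: weight_pos less_imp_le)
  moreover have "l1norm \<omega> ?r = infsum ?g (- A)"
    unfolding l1norm_def by (rule infsum_cong_neutral) auto
  moreover have "infsum ?g (- A) = l1norm \<omega> a - sum ?g A"
    using infsum_Un_disjoint[of ?g A "- A"] l1w_weighted_summable[OF a] A(1)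
    by (simp add: l1norm_def)
  moreover have "infsum ?g (- A) \<ge> 0" by (rule infsum_nonneg) (simp add: weight_pos less_imp_le)
  ultimately show ?thesis using that A by (simp add: dist_real_def)
qed

text \<open>Dual norm estimate from point masses: if |h(e_s)| \<le> c \<omega>(s) for all s, then
  |h(a)| \<le> c \<parallel>a\<parallel>, since the point masses span a dense subspace.\<close>

lemma bounded_by_dirac_values:
  assumes h: "linear_fun \<omega> h" and C: "\<forall>a\<in>l1w \<omega>. norm (h a) \<le> C * l1norm \<omega> a"
    and e: "\<And>s. norm (h (dirac s)) \<le> e * \<omega> s" "e \<ge> 0" and a: "a \<in> l1w \<omega>"
  shows "norm (h a) \<le> e * l1norm \<omega> a"
proof (rule field_le_epsilon)
  fix \<eta> :: real assume "\<eta> > 0"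
  define C' where "C' = max C 0 + 1"
  then have "C' > 0" by simp
  with \<open>\<eta> > 0\<close> obtain A where A: "finite A"
    and r: "(\<lambda>x. if x \<in> A then 0 else a x) \<in> l1w \<omega>"
    and r_small: "l1norm \<omega> (\<lambda>x. if x \<in> A then 0 else a x) \<le> \<eta> / C'"
    and A_sum: "(\<Sum>s\<in>A. norm (a s) * \<omega> s) \<le> l1norm \<omega> a"
    using l1w_finite_approximation[OF a, of "\<eta> / C'"] by auto
  let ?aA = "\<lambda>x. if x \<in> A then a x else 0" and ?r = "\<lambda>x. if x \<in> A then 0 else a x"
  have aA: "?aA \<in> l1w \<omega>" by (rule l1w_finite_support[OF A]) auto
  have "a = (\<lambda>x. ?aA x + ?r x)" by auto
  then have "h a = h ?aA + h ?r" using linear_fun_add[OF h aA r] by simp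
  then have "norm (h a) \<le> norm (h ?aA) + norm (h ?r)" by (simp add: norm_triangle_ineq)
  also have "norm (h ?aA) \<le> e * l1norm \<omega> a"
  proof -
    have "norm (h ?aA) \<le> (\<Sum>s\<in>A. norm (a s * h (dirac s)))"
      unfolding linear_fun_finite_support[OF h A] by (rule norm_sum)
    also have "\<dots> \<le> (\<Sum>s\<in>A. e * (norm (a s) * \<omega> s))"
    proof (rule sum_mono)
      fix s
      have "norm (a s) * norm (h (dirac s)) \<le> norm (a s) * (e * \<omega> s)"
        using e(1) by (rule mult_left_mono) simp
      then show "norm (a s * h (dirac s)) \<le> e * (norm (a s) * \<omega> s)"
        by (simp add: norm_mult algebra_simps)
    qed
    also have "\<dots> \<le> e * l1norm \<omega> a"
      using A_sum e(2) by (simp add: sum_distrib_left[symmetric] mult_left_mono)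
    finally show ?thesis .
  qed
  also have "norm (h ?r) \<le> C' * (\<eta> / C')"
  proof -
    have "norm (h ?r) \<le> C * l1norm \<omega> ?r" using C r by blast
    also have "\<dots> \<le> C' * l1norm \<omega> ?r"
      by (rule mult_right_mono[OF _ l1norm_nonneg]) (simp add: C'_def)
    also have "\<dots> \<le> C' * (\<eta> / C')" using r_small \<open>C' > 0\<close> by (intro mult_left_mono) auto
    finally show ?thesis .
  qed
  finally show "norm (h a) \<le> e * l1norm \<omega> a + \<eta>" using \<open>C' > 0\<close> by simp
qed

lemma dual_norm_le_dirac_bound:
  assumes "linear_fun \<omega> h" "\<forall>a\<in>l1w \<omega>. norm (h a) \<le> C * l1norm \<omega> a"
    and "\<And>s. norm (h (dirac s)) \<le> e * \<omega> s" "e \<ge> 0"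
  shows "dual_norm \<omega> h \<le> e"
  unfolding dual_norm_def
proof (rule cSup_least)
  have "l1norm \<omega> (\<lambda>s. 0) = 0" by (simp add: l1norm_def)
  then show "{norm (h a) |a. a \<in> l1w \<omega> \<and> l1norm \<omega> a \<le> 1} \<noteq> {}"
    using l1w_zero by auto
next
  fix x assume "x \<in> {norm (h a) |a. a \<in> l1w \<omega> \<and> l1norm \<omega> a \<le> 1}"
  then obtain a where "x = norm (h a)" "a \<in> l1w \<omega>" "l1norm \<omega> a \<le> 1" by blast
  then show "x \<le> e"
    using bounded_by_dirac_values[OF assms] mult_left_le[of "l1norm \<omega> a" e] assms(4)
    by (metis order_trans)
qed

lemma close_to_filter_character:
  assumes \<psi>: "bdd_lin_fun \<omega> \<psi>" and F: "sl_filter (\<^bold>*) F" and "\<epsilon> \<ge> 0"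
    and close: "\<And>s. norm (\<psi> (dirac s) - (if s \<in> F then 1 else 0)) \<le> \<epsilon> * \<omega> s"
  shows "\<exists>\<phi>. mult_fun f \<omega> \<phi> \<and> dual_norm \<omega> (\<lambda>a. \<psi> a - \<phi> a) \<le> \<epsilon>"
proof (intro exI conjI)
  let ?\<phi> = "\<lambda>a. infsum a F"
  show \<phi>: "mult_fun f \<omega> ?\<phi>" by (rule filter_character[OF F])
  obtain C where C: "\<forall>a\<in>l1w \<omega>. norm (\<psi> a) \<le> C * l1norm \<omega> a"
    using \<psi> by (auto simp: bdd_lin_fun_iff)
  have "linear_fun \<omega> (\<lambda>a. \<psi> a - ?\<phi> a)"
    using \<psi> \<phi> by (intro linear_fun_diff) (simp_all add: mult_fun_def bdd_lin_fun_iff)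
  moreover have "\<forall>a\<in>l1w \<omega>. norm (\<psi> a - ?\<phi> a) \<le> (C + 1) * l1norm \<omega> a"
  proof
    fix a assume "a \<in> l1w \<omega>"
    then have "norm (\<psi> a - ?\<phi> a) \<le> C * l1norm \<omega> a + l1norm \<omega> a"
      using C \<open>a \<in> l1w \<omega>\<close> filter_sum_bound[of a F] norm_triangle_ineq4[of "\<psi> a" "?\<phi> a"]
      by fastforce
    then show "norm (\<psi> a - ?\<phi> a) \<le> (C + 1) * l1norm \<omega> a" by (simp add: distrib_right)
  qed
  ultimately show "dual_norm \<omega> (\<lambda>a. \<psi> a - ?\<phi> a) \<le> \<epsilon>"
    using dual_norm_le_dirac_bound close \<open>\<epsilon> \<ge> 0\<close> by (simp add: filter_sum_dirac)
qed

text \<open>Testing the defect on the normalised point masses e_s/\<omega>(s), e_t/\<omega>(t) shows that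
  s \<mapsto> \<psi>(e_s) is multiplicative up to def(\<psi>) \<omega>(s) \<omega>(t).\<close>

lemma defect_on_dirac:
  assumes \<psi>: "bdd_lin_fun \<omega> \<psi>"
  shows "norm (\<psi> (dirac (s \<^bold>* t)) - \<psi> (dirac s) * \<psi> (dirac t)) \<le> defect f \<omega> \<psi> * \<omega> s * \<omega> t"
proof -
  obtain C where "\<forall>a\<in>l1w \<omega>. norm (\<psi> a) \<le> C * l1norm \<omega> a"
    using \<psi> by (auto simp: bdd_lin_fun_iff)
  then have C: "norm (\<psi> a) \<le> max C 0" if "a \<in> l1w \<omega>" "l1norm \<omega> a \<le> 1" for a
  proof -
    have "norm (\<psi> a) \<le> C * l1norm \<omega> a" using \<open>\<forall>a\<in>l1w \<omega>. _\<close> that(1) by blast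
    also have "\<dots> \<le> max C 0 * l1norm \<omega> a" by (rule mult_right_mono[OF _ l1norm_nonneg]) simp
    also have "\<dots> \<le> max C 0" using that(2) l1norm_nonneg by (intro mult_left_le) auto
    finally show ?thesis .
  qed
  let ?S = "{norm (\<psi> (conv f a b) - \<psi> a * \<psi> b) | a b.
       a \<in> l1w \<omega> \<and> b \<in> l1w \<omega> \<and> l1norm \<omega> a \<le> 1 \<and> l1norm \<omega> b \<le> 1}"
  have "bdd_above ?S"
  proof (rule bdd_aboveI)
    fix x assume "x \<in> ?S"
    then obtain a b where ab: "x = norm (\<psi> (conv f a b) - \<psi> a * \<psi> b)" "a \<in> l1w \<omega>" "b \<in> l1w \<omega>"
      "l1norm \<omega> a \<le> 1" "l1norm \<omega> b \<le> 1" by blast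
    have "l1norm \<omega> (conv f a b) \<le> 1"
      using conv_l1w(2)[OF ab(2,3)] ab(4,5) l1norm_nonneg[of a] l1norm_nonneg[of b]
      by (meson mult_le_one order_trans)
    then have "norm (\<psi> (conv f a b)) \<le> max C 0" using C conv_l1w(1)[OF ab(2,3)] by blast
    moreover have "norm (\<psi> a) * norm (\<psi> b) \<le> max C 0 * max C 0"
      using C ab by (intro mult_mono) auto
    moreover have "x \<le> norm (\<psi> (conv f a b)) + norm (\<psi> a) * norm (\<psi> b)"
      unfolding ab(1) using norm_triangle_ineq4[of "\<psi> (conv f a b)" "\<psi> a * \<psi> b"]
      by (simp add: norm_mult)
    ultimately show "x \<le> max C 0 + max C 0 * max C 0" by linarith
  qed
  define c where "c = (\<lambda>s. 1 / complex_of_real (\<omega> s))"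
  have normalised: "(\<lambda>x. c s * dirac s x) \<in> l1w \<omega>" "l1norm \<omega> (\<lambda>x. c s * dirac s x) \<le> 1" for s
  proof -
    show "(\<lambda>x. c s * dirac s x) \<in> l1w \<omega>" by (rule l1w_scale[OF dirac_l1w])
    have "norm (c s) * \<omega> s = 1" using weight_pos[of s] by (simp add: c_def norm_divide)
    then show "l1norm \<omega> (\<lambda>x. c s * dirac s x) \<le> 1" by (simp only: l1norm_scaled_dirac)
  qed
  have "norm (\<psi> (conv f (\<lambda>x. c s * dirac s x) (\<lambda>x. c t * dirac t x))
              - \<psi> (\<lambda>x. c s * dirac s x) * \<psi> (\<lambda>x. c t * dirac t x)) \<le> defect f \<omega> \<psi>"
    unfolding defect_def by (rule cSup_upper[OF _ \<open>bdd_above ?S\<close>]) (use normalised in blast)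
  moreover have "linear_fun \<omega> \<psi>" using \<psi> by (simp add: bdd_lin_fun_iff)
  then have "\<psi> (\<lambda>x. c u * dirac u x) = c u * \<psi> (dirac u)"
    and "\<psi> (\<lambda>x. (c s * c t) * dirac (s \<^bold>* t) x) = (c s * c t) * \<psi> (dirac (s \<^bold>* t))" for u
    by (simp_all add: linear_fun_scale dirac_l1w)
  ultimately have "norm (c s * c t * (\<psi> (dirac (s \<^bold>* t)) - \<psi> (dirac s) * \<psi> (dirac t))) \<le> defect f \<omega> \<psi>"
    unfolding conv_dirac by (simp add: right_diff_distrib mult_ac)
  then show ?thesis
    using weight_pos[of s] weight_pos[of t]
    by (simp add: c_def norm_mult norm_divide field_simps)
qed

lemma small_defect_near_mult:
  assumes "bdd_lin_fun \<omega> \<psi>" "defect f \<omega> \<psi> \<le> \<delta>"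
  shows "near_mult (\<^bold>*) \<omega> \<delta> (\<lambda>s. \<psi> (dirac s))"
  unfolding near_mult_def
proof (intro allI)
  fix s t
  have "defect f \<omega> \<psi> * \<omega> s * \<omega> t \<le> \<delta> * \<omega> s * \<omega> t"
    using assms(2) by (intro mult_right_mono) (simp_all add: weight_pos less_imp_le)
  then show "norm (\<psi> (dirac (s \<^bold>* t)) - \<psi> (dirac s) * \<psi> (dirac t)) \<le> \<delta> * \<omega> s * \<omega> t"
    using defect_on_dirac[OF assms(1), of s t] by linarith
qed

text \<open>Points of weight \<le> K = 4/\<epsilon> are handled by
  near_filter_on_generators (flightiness bounds the weight on the subsemigroup they
  generate), points of larger weight by near_idempotent_large_weight.\<close>

theorem near_mult_close_to_filter:
  assumes "flighty f \<omega>" "\<epsilon> > 0"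
  shows "\<exists>\<delta>>0. \<forall>g. near_mult (\<^bold>*) \<omega> \<delta> g \<longrightarrow>
           (\<exists>F. sl_filter (\<^bold>*) F \<and> (\<forall>s. norm (g s - (if s \<in> F then 1 else 0)) \<le> \<epsilon> * \<omega> s))"
proof -
  define K where "K = 4 / \<epsilon>"
  define W where "W = {x. \<omega> x \<le> K}"
  have "K > 0" using assms(2) by (simp add: K_def)
  then obtain M0 where "\<And>x. x \<in> gen (\<^bold>*) W \<Longrightarrow> \<omega> x \<le> M0"
    using assms(1) unfolding flighty_def bdd_above_def W_def by fast
  then obtain M where M: "M \<ge> 1" "\<And>x. x \<in> gen (\<^bold>*) W \<Longrightarrow> \<omega> x \<le> M"
    by (metis max.cobounded1 max.cobounded2 order.trans)
  define \<eta> where "\<eta> = min \<epsilon> (1/10)"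
  define \<delta> where "\<delta> = min (\<epsilon>\<^sup>2/8) (\<eta> / (2 * M\<^sup>2))"
  have \<eta>: "0 < \<eta>" "\<eta> \<le> 1/10" "\<eta> \<le> \<epsilon>" using assms by (auto simp: \<eta>_def)
  have "\<delta> > 0" using \<eta>(1) M(1) assms(2) by (simp add: \<delta>_def)
  moreover have "\<exists>F. sl_filter (\<^bold>*) F \<and> (\<forall>s. norm (g s - (if s \<in> F then 1 else 0)) \<le> \<epsilon> * \<omega> s)"
    if "near_mult (\<^bold>*) \<omega> \<delta> g" for g
  proof -
    have g: "norm (g (s \<^bold>* t) - g s * g t) \<le> \<delta> * \<omega> s * \<omega> t" for s t
      using that by (simp add: near_mult_def)
    have pair_small: "\<delta> * \<omega> x * \<omega> y \<le> \<eta>/2" if "x \<in> gen (\<^bold>*) W" "y \<in> gen (\<^bold>*) W" for x y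
    proof -
      have "\<omega> x * \<omega> y \<le> M\<^sup>2"
        using mult_mono[OF M(2)[OF that(1)] M(2)[OF that(2)]] M(1) weight_pos[of y]
        by (simp add: power2_eq_square)
      moreover have "\<delta> \<le> \<eta> / (2 * M\<^sup>2)" by (simp add: \<delta>_def)
      ultimately have "\<delta> * (\<omega> x * \<omega> y) \<le> \<eta> / (2 * M\<^sup>2) * M\<^sup>2"
        using \<open>\<delta> > 0\<close> \<eta>(1) weight_pos[of x] weight_pos[of y] by (intro mult_mono) auto
      also have "\<dots> = \<eta> / 2" using M(1) by simp
      finally show ?thesis by (simp add: mult.assoc)
    qed
    have "norm (g (x \<^bold>* y) - g x * g y) \<le> \<eta>/2" if "x \<in> gen (\<^bold>*) W" "y \<in> gen (\<^bold>*) W" for x y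
      using order_trans[OF g pair_small[OF that]] .
    then obtain F where F: "sl_filter (\<^bold>*) F"
      and on_W: "\<forall>t\<in>W. norm (g t - (if t \<in> F then 1 else 0)) \<le> \<eta>"
      using near_filter_on_generators[OF \<eta>(1,2)] by blast
    have "norm (g s - (if s \<in> F then 1 else 0)) \<le> \<epsilon> * \<omega> s" for s
    proof (cases "s \<in> W")
      case True
      then have "norm (g s - (if s \<in> F then 1 else 0)) \<le> \<epsilon> * 1" using on_W \<eta>(3) by fastforce
      also have "\<dots> \<le> \<epsilon> * \<omega> s" using weight_ge_one assms(2) by (intro mult_left_mono) auto
      finally show ?thesis .
    next
      case False
      then have "\<epsilon> * \<omega> s > 4" using assms(2) by (simp add: W_def K_def field_simps)
      moreover have "norm (g s) \<le> (\<epsilon>/2) * \<omega> s"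
        using near_idempotent_large_weight[of "g s" \<delta> "\<omega> s" \<epsilon>] g[of s s] \<open>\<epsilon> * \<omega> s > 4\<close> assms(2)
        by (simp add: \<delta>_def)
      moreover have "norm (if s \<in> F then 1 else 0 :: complex) \<le> 1" by simp
      ultimately show ?thesis
        using norm_triangle_ineq4[of "g s" "if s \<in> F then 1 else 0"] by linarith
    qed
    with F show ?thesis by blast
  qed
  ultimately show ?thesis by blast
qed

end

theorem theoremt:
  fixes f :: "'a \<Rightarrow> 'a \<Rightarrow> 'a" and \<omega> :: "'a \<Rightarrow> real"
  assumes "semilattice f"
    and "submult_weight f \<omega>"
    and "flighty f \<omega>"
  shows "AMNM f \<omega>"
  unfolding AMNM_def
proof (intro allI impI)
  interpret weighted_semilattice f \<omega>
    using assms(1,2) by (intro weighted_semilattice.intro weighted_semilattice_axioms.intro)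
  fix \<epsilon> :: real assume "\<epsilon> > 0"
  then obtain \<delta> where "\<delta> > 0" and stable: "\<And>g. near_mult f \<omega> \<delta> g \<Longrightarrow>
      \<exists>F. sl_filter f F \<and> (\<forall>s. norm (g s - (if s \<in> F then 1 else 0)) \<le> \<epsilon> * \<omega> s)"
    using near_mult_close_to_filter[OF assms(3)] by blast
  show "\<exists>\<delta>>0. \<forall>\<psi>. bdd_lin_fun \<omega> \<psi> \<and> defect f \<omega> \<psi> \<le> \<delta> \<longrightarrow>
      (\<exists>\<phi>. mult_fun f \<omega> \<phi> \<and> dual_norm \<omega> (\<lambda>a. \<psi> a - \<phi> a) \<le> \<epsilon>)"
  proof (intro exI[of _ \<delta>] conjI allI impI)
    fix \<psi> assume \<psi>: "bdd_lin_fun \<omega> \<psi> \<and> defect f \<omega> \<psi> \<le> \<delta>"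
    then obtain F where "sl_filter f F" "\<forall>s. norm (\<psi> (dirac s) - (if s \<in> F then 1 else 0)) \<le> \<epsilon> * \<omega> s"
      using stable small_defect_near_mult by blast
    then show "\<exists>\<phi>. mult_fun f \<omega> \<phi> \<and> dual_norm \<omega> (\<lambda>a. \<psi> a - \<phi> a) \<le> \<epsilon>"
      using close_to_filter_character \<psi> \<open>\<epsilon> > 0\<close> by simp
  qed (rule \<open>\<delta> > 0\<close>)
qed

end
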